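(* Let $n = 2$, $\mathsf{AP}^I_L = \{i\}$ and $\mathsf{AP}^O = \{o\}$, so that $\mathcal{I} = 2^{\{i\}\times\{0,1\}}$ and $\mathcal{O} = 2^{\{o\}\times\{0,1\}}$. The set of all computation trees $\tau : \mathcal{I}^* \to \mathcal{O}$ that have the symmetry property is not a regular tree language.
   Context: For $u \subseteq \mathsf{AP}\times\{0,1\}$ and $k\in\mathbb{Z}$, $\mathrm{rot}(u,k) = \{(p,(j+k)\bmod 2) \mid (p,j)\in u\}$ (modulo always returns a value in $\{0,1\}$), extended letterwise to words. A computation tree is a map $\tau : \mathcal{I}^* \to \mathcal{O}$. It has the symmetry property if $\tau(\mathrm{rot}(t,k)) = \mathrm{rot}(\tau(t),k)$ for all $t\in\mathcal{I}^*$ and $k\in\{0,1\}$. A set of such trees is a regular tree language if it is the language of some finite tree automaton (e.g., with Muller acceptance condition) over $\mathcal{I}$-branching, $\mathcal{O}$-labelled infinite trees. *)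

theory Defs
  imports Main "HOL-Library.Numeral_Type"
begin

text \<open>Index set {0,1} is modelled by the type 2 (integers modulo 2), so that
  (j + k) mod 2 is just j + of_int k.\<close>

definition rot :: "('p \<times> 2) set \<Rightarrow> int \<Rightarrow> ('p \<times> 2) set" where
  "rot u k = (\<lambda>(p, j). (p, j + of_int k)) ` u"

definition rot_word :: "('p \<times> 2) set list \<Rightarrow> int \<Rightarrow> ('p \<times> 2) set list" where
  "rot_word t k = map (\<lambda>u. rot u k) t"

definition symmetric_tree :: "(('p \<times> 2) set list \<Rightarrow> ('q \<times> 2) set) \<Rightarrow> bool" where
  "symmetric_tree \<tau> \<longleftrightarrow>
     (\<forall>t. \<forall>k::int \<in> {0, 1}. \<tau> (rot_word t k) = rot (\<tau> t) k)"

text \<open>Nondeterministic Muller tree automata over 'i-branching, 'o-labelled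
  infinite trees (trees are maps 'i list => 'o; the children of node w are w @ [a]).
  States are drawn from nat (any finite state set can be renamed into nat).\<close>

definition is_run ::
  "nat \<Rightarrow> (nat \<times> 'o \<times> ('i \<Rightarrow> nat)) set \<Rightarrow> ('i list \<Rightarrow> 'o) \<Rightarrow> ('i list \<Rightarrow> nat) \<Rightarrow> bool" where
  "is_run q0 \<delta> \<tau> r \<longleftrightarrow> r [] = q0 \<and> (\<forall>w. (r w, \<tau> w, \<lambda>a. r (w @ [a])) \<in> \<delta>)"

definition muller_accepting :: "nat set set \<Rightarrow> ('i list \<Rightarrow> nat) \<Rightarrow> bool" where
  "muller_accepting F r \<longleftrightarrow>
     (\<forall>\<pi> :: nat \<Rightarrow> 'i. {q. \<exists>\<^sub>\<infinity>n. r (map \<pi> [0..<n]) = q} \<in> F)"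

definition tree_lang ::
  "nat \<Rightarrow> (nat \<times> 'o \<times> ('i \<Rightarrow> nat)) set \<Rightarrow> nat set set \<Rightarrow> ('i list \<Rightarrow> 'o) set" where
  "tree_lang q0 \<delta> F = {\<tau>. \<exists>r. is_run q0 \<delta> \<tau> r \<and> muller_accepting F r}"

definition regular_tree_language :: "('i list \<Rightarrow> 'o) set \<Rightarrow> bool" where
  "regular_tree_language L \<longleftrightarrow>
     (\<exists>(Q::nat set) q0 \<delta> F. finite Q \<and> q0 \<in> Q \<and> \<delta> \<subseteq> Q \<times> UNIV \<times> {f. range f \<subseteq> Q}
        \<and> F \<subseteq> Pow Q \<and> L = tree_lang q0 \<delta> F)"

datatype apI = i_prop
datatype apO = o_prop

end

theory Submission
  imports Defs "HOL-Library.Infinite_Set"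
begin

text \<open>A finite automaton cannot remember the depth at which a tree carries its only
  nonempty labels. Let \<open>spike m\<close> be the symmetric tree that outputs \<open>{(o,0)}\<close> at the
  node \<open>{(i,0)}\<^sup>m\<^sup>+\<^sup>1\<close>, \<open>{(o,1)}\<close> at \<open>{(i,1)}\<^sup>m\<^sup>+\<^sup>1\<close> and nothing elsewhere. An automaton
  accepting all of them reaches the same state at the child \<open>[{(i,1)}]\<close> for two depths
  \<open>m \<noteq> n\<close>; grafting the \<open>{(i,1)}\<close>-subtree of \<open>spike n\<close> into \<open>spike m\<close> then gives an
  accepting run on a tree that is not symmetric.\<close>

definition graft_branch :: "'i \<Rightarrow> ('i list \<Rightarrow> 'b) \<Rightarrow> ('i list \<Rightarrow> 'b) \<Rightarrow> 'i list \<Rightarrow> 'b" where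
  "graft_branch b f g w = (if w \<noteq> [] \<and> hd w = b then g w else f w)"

lemma is_run_graft_branch:
  assumes "is_run q0 \<delta> \<tau>\<^sub>1 r\<^sub>1" and "is_run q0 \<delta> \<tau>\<^sub>2 r\<^sub>2" and "r\<^sub>1 [b] = r\<^sub>2 [b]"
  shows "is_run q0 \<delta> (graft_branch b \<tau>\<^sub>1 \<tau>\<^sub>2) (graft_branch b r\<^sub>1 r\<^sub>2)"
  unfolding is_run_def
proof (intro conjI allI)
  show "graft_branch b r\<^sub>1 r\<^sub>2 [] = q0"
    using assms(1) by (simp add: graft_branch_def is_run_def)
next
  fix w
  show "(graft_branch b r\<^sub>1 r\<^sub>2 w, graft_branch b \<tau>\<^sub>1 \<tau>\<^sub>2 w, \<lambda>a. graft_branch b r\<^sub>1 r\<^sub>2 (w @ [a])) \<in> \<delta>"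
  proof (cases "w = []")
    case True
    have "(\<lambda>a. graft_branch b r\<^sub>1 r\<^sub>2 [a]) = (\<lambda>a. r\<^sub>1 [a])"
      using assms(3) by (auto simp: graft_branch_def)
    moreover have "(r\<^sub>1 [], \<tau>\<^sub>1 [], \<lambda>a. r\<^sub>1 ([] @ [a])) \<in> \<delta>"
      using assms(1) unfolding is_run_def by blast
    ultimately show ?thesis
      using True by (simp add: graft_branch_def)
  next
    case False
    then have "hd (w @ [a]) = hd w" for a by simp
    with False assms(1,2) show ?thesis by (simp add: graft_branch_def is_run_def)
  qed
qed

lemma muller_accepting_graft_branch:
  assumes "muller_accepting F r\<^sub>1" and "muller_accepting F r\<^sub>2"
  shows "muller_accepting F (graft_branch b r\<^sub>1 r\<^sub>2)"
  unfolding muller_accepting_def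
proof
  fix \<pi> :: "nat \<Rightarrow> _"
  define r where "r = (if \<pi> 0 = b then r\<^sub>2 else r\<^sub>1)"
  have "graft_branch b r\<^sub>1 r\<^sub>2 (map \<pi> [0..<k]) = r (map \<pi> [0..<k])" if "1 \<le> k" for k
    using that by (simp add: graft_branch_def r_def hd_map upt_rec[of 0 k])
  then have "(\<exists>\<^sub>\<infinity>k. graft_branch b r\<^sub>1 r\<^sub>2 (map \<pi> [0..<k]) = q) \<longleftrightarrow> (\<exists>\<^sub>\<infinity>k. r (map \<pi> [0..<k]) = q)" for q
    by (intro frequently_cong[OF MOST_ge_nat[of 1]]) simp
  moreover have "{q. \<exists>\<^sub>\<infinity>k. r (map \<pi> [0..<k]) = q} \<in> F"
    using assms unfolding muller_accepting_def r_def by simp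
  ultimately show "{q. \<exists>\<^sub>\<infinity>k. graft_branch b r\<^sub>1 r\<^sub>2 (map \<pi> [0..<k]) = q} \<in> F"
    by simp
qed

lemma regular_tree_language_graft_branch:
  fixes \<tau>s :: "nat \<Rightarrow> 'i list \<Rightarrow> 'o"
  assumes "regular_tree_language L" and "\<And>m. \<tau>s m \<in> L"
  shows "\<exists>m n. m \<noteq> n \<and> graft_branch b (\<tau>s m) (\<tau>s n) \<in> L"
proof -
  obtain Q q0 \<delta> F where "finite Q" and \<delta>: "\<delta> \<subseteq> Q \<times> UNIV \<times> {f. range f \<subseteq> Q}"
    and L: "L = tree_lang q0 \<delta> F"
    using assms(1) unfolding regular_tree_language_def by blast
  have "\<forall>m. \<exists>r. is_run q0 \<delta> (\<tau>s m) r \<and> muller_accepting F r"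
    using assms(2) unfolding L tree_lang_def by blast
  then obtain r where run: "\<And>m. is_run q0 \<delta> (\<tau>s m) (r m)" and acc: "\<And>m. muller_accepting F (r m)"
    by (metis choice)
  have "r m [b] \<in> Q" for m
  proof -
    have "(r m [], \<tau>s m [], \<lambda>a. r m ([] @ [a])) \<in> \<delta>"
      using run unfolding is_run_def by blast
    with \<delta> show ?thesis by auto
  qed
  with \<open>finite Q\<close> have "finite (range (\<lambda>m. r m [b]))"
    by (meson finite_subset image_subsetI)
  then have "\<not> inj (\<lambda>m. r m [b])"
    using finite_imageD by fastforce
  then obtain m n where "m \<noteq> n" and same_state: "r m [b] = r n [b]"
    unfolding inj_def by blast
  have "is_run q0 \<delta> (graft_branch b (\<tau>s m) (\<tau>s n)) (graft_branch b (r m) (r n))"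
    by (rule is_run_graft_branch[OF run run same_state])
  moreover have "muller_accepting F (graft_branch b (r m) (r n))"
    by (rule muller_accepting_graft_branch[OF acc acc])
  ultimately show ?thesis
    using \<open>m \<noteq> n\<close> unfolding L tree_lang_def by blast
qed

lemma rot_rot: "rot (rot u k) l = rot u (k + l)"
  unfolding rot_def by (force simp: image_image case_prod_beta add.assoc)

lemma rot_0 [simp]: "rot u 0 = u"
  unfolding rot_def by (simp add: case_prod_beta)

lemma rot_1_1 [simp]: "rot (rot u 1) 1 = u"
proof -
  have two: "(2 :: 2) = 0" by simp
  show ?thesis unfolding rot_rot by (simp add: rot_def case_prod_beta two)
qed

lemma rot_word_1_eq_iff: "rot_word t 1 = s \<longleftrightarrow> t = rot_word s 1"
  unfolding rot_word_def by (auto simp: comp_def)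

lemma symmetric_tree_iff: "symmetric_tree \<tau> \<longleftrightarrow> (\<forall>t. \<tau> (rot_word t 1) = rot (\<tau> t) 1)"
  by (auto simp: symmetric_tree_def rot_word_def)

abbreviation in0 :: "(apI \<times> 2) set" where "in0 \<equiv> {(i_prop, 0)}"
abbreviation in1 :: "(apI \<times> 2) set" where "in1 \<equiv> {(i_prop, 1)}"
abbreviation out0 :: "(apO \<times> 2) set" where "out0 \<equiv> {(o_prop, 0)}"
abbreviation out1 :: "(apO \<times> 2) set" where "out1 \<equiv> {(o_prop, 1)}"

lemma rot_singleton_1 [simp]: "rot {(p, j)} 1 = {(p, j + 1)}"
  by (simp add: rot_def)

lemma rot_word_replicate_1 [simp]: "rot_word (replicate n {(p, j)}) 1 = replicate n {(p, j + 1)}"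
  by (simp add: rot_word_def)

definition spike :: "nat \<Rightarrow> (apI \<times> 2) set list \<Rightarrow> (apO \<times> 2) set" where
  "spike m t = (if t = replicate (Suc m) in0 then out0
                else if t = replicate (Suc m) in1 then out1 else {})"

lemma symmetric_spike: "symmetric_tree (spike m)"
  unfolding symmetric_tree_iff spike_def
  by (auto simp: rot_word_1_eq_iff rot_def simp del: replicate_Suc)

lemma not_symmetric_graft_spike:
  assumes "m \<noteq> n"
  shows "\<not> symmetric_tree (graft_branch in1 (spike m) (spike n))"
proof
  let ?t = "replicate (Suc m) in0"
  assume "symmetric_tree (graft_branch in1 (spike m) (spike n))"
  then have "graft_branch in1 (spike m) (spike n) (rot_word ?t 1)
             = rot (graft_branch in1 (spike m) (spike n) ?t) 1"
    unfolding symmetric_tree_iff by blast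
  with assms show False
    by (simp add: graft_branch_def spike_def del: replicate_Suc)
qed

theorem lemma6:
  shows "\<not> regular_tree_language
           {\<tau> :: (apI \<times> 2) set list \<Rightarrow> (apO \<times> 2) set. symmetric_tree \<tau>}"
proof
  assume "regular_tree_language {\<tau> :: (apI \<times> 2) set list \<Rightarrow> (apO \<times> 2) set. symmetric_tree \<tau>}"
  then obtain m n where "m \<noteq> n" and "symmetric_tree (graft_branch in1 (spike m) (spike n))"
    using regular_tree_language_graft_branch[where \<tau>s = spike] symmetric_spike by blast
  then show False
    using not_symmetric_graft_spike by blast
qed

end
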